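(* Let $T$ be a Boolean algebra (with order $\le$, meet $\land$, join $\lor$ and complement $\neg$), and let $(a,g)$ and $(a',g')$ be contracts over $T$. Let $\mathcal{C}_q=(a_q,g_q)$ be the quotient $(a,g)/(a',g')$, given by $$a_q=a\land(\neg a'\lor g'),\qquad g_q=(a'\land g)\lor\neg a\lor(a'\land\neg g').$$ Suppose that $a''\in T$ satisfies $a_q\le a''$, and that $g'',g'''\in T$ satisfy $a'\land g'\land g''\le a'\land g'\land g$ and $g'''\land a\le a'\land g''\land a$. Then the contract $(a'',g''')$ is a refinement of $\mathcal{C}_q$, i.e. $(a'',g''')\le\mathcal{C}_q$.
   Context: A contract over a Boolean algebra $T$ (the "term algebra") is a pair $(a,g)$ of elements of $T$, called assumptions and guarantees. Contracts are ordered by refinement: for contracts $\mathcal{C}=(a,g)$ and $\mathcal{C}'=(a',g')$, $\mathcal{C}\le\mathcal{C}'$ (read "$\mathcal{C}$ is a refinement of $\mathcal{C}'$") holds iff $a'\le a$ and $g\lor\neg a\le g'\lor\neg a'$. *)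

theory Defs
  imports Main
begin

text \<open>Contracts over a Boolean algebra: pairs (assumption, guarantee).
Refinement: (a,g) \<le> (a',g') iff a' \<le> a and g \<squnion> -a \<le> g' \<squnion> -a'.\<close>

definition contract_refines :: "'a::boolean_algebra \<times> 'a \<Rightarrow> 'a \<times> 'a \<Rightarrow> bool" where
  "contract_refines C C' \<longleftrightarrow>
     fst C' \<le> fst C \<and> sup (snd C) (- fst C) \<le> sup (snd C') (- fst C')"

definition contract_quotient :: "'a::boolean_algebra \<times> 'a \<Rightarrow> 'a \<times> 'a \<Rightarrow> 'a \<times> 'a" where
  "contract_quotient C C' =
     (let a = fst C; g = snd C; a' = fst C'; g' = snd C' in
      (inf a (sup (- a') g'),
       sup (sup (inf a' g) (- a)) (inf a' (- g'))))"

end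

theory Submission
  imports Defs
begin

text \<open>It suffices to compare the components separately. The guarantee \<open>g'''\<close> lies below
  the quotient guarantee because \<open>g''' \<sqinter> a \<le> a' \<sqinter> g''\<close>, and splitting \<open>a' \<sqinter> g''\<close> along \<open>g'\<close>
  bounds it by \<open>(a' \<sqinter> g) \<squnion> (a' \<sqinter> -g')\<close>.\<close>

lemma contract_quotient_simps [simp]:
  "fst (contract_quotient (a, g) (a', g')) = inf a (sup (- a') g')"
  "snd (contract_quotient (a, g) (a', g')) = sup (sup (inf a' g) (- a)) (inf a' (- g'))"
  by (simp_all add: contract_quotient_def)

lemma contract_refinesI:
  fixes a g a' g' :: "'a::boolean_algebra"
  assumes "a' \<le> a" and "g \<le> g'"
  shows "contract_refines (a, g) (a', g')"
  unfolding contract_refines_def fst_conv snd_conv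
  using assms compl_mono[OF assms(1)] by (blast intro: sup_mono)

lemma inf_le_sup_inf_compl:
  fixes x y z w :: "'a::boolean_algebra"
  assumes "inf (inf x y) w \<le> z"
  shows "inf x w \<le> sup z (inf x (- y))"
proof -
  have "inf (inf x w) y \<le> z"
    using assms by (simp add: inf_aci)
  then have "inf x w \<le> sup (- y) z"
    by (simp only: shunt1)
  then have "inf x w \<le> inf x (sup (- y) z)"
    by simp
  also have "\<dots> \<le> sup z (inf x (- y))"
    by (simp add: inf_sup_distrib1 le_supI1 le_infI2)
  finally show ?thesis .
qed

lemma le_contract_quotient_guarantee:
  fixes a g a' g' g'' g''' :: "'a::boolean_algebra"
  assumes "inf (inf a' g') g'' \<le> inf (inf a' g') g"
    and "inf g''' a \<le> inf (inf a' g'') a"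
  shows "g''' \<le> snd (contract_quotient (a, g) (a', g'))"
proof -
  have "inf (inf a' g') g'' \<le> inf a' g"
    using assms(1) by (simp add: le_inf_iff)
  then have "inf a' g'' \<le> sup (inf a' g) (inf a' (- g'))"
    by (rule inf_le_sup_inf_compl)
  with assms(2) have "inf g''' a \<le> sup (inf a' g) (inf a' (- g'))"
    by (meson inf_le1 order_trans)
  then have "g''' \<le> sup (- a) (sup (inf a' g) (inf a' (- g')))"
    by (simp add: shunt1)
  then show ?thesis
    by (simp add: sup_aci)
qed

theorem theorem2:
  fixes a g a' g' a'' g'' g''' :: "'a::boolean_algebra"
  assumes "fst (contract_quotient (a, g) (a', g')) \<le> a''"
    and "inf (inf a' g') g'' \<le> inf (inf a' g') g"
    and "inf g''' a \<le> inf (inf a' g'') a"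
  shows "contract_refines (a'', g''') (contract_quotient (a, g) (a', g'))"
proof -
  have "g''' \<le> snd (contract_quotient (a, g) (a', g'))"
    using assms(2,3) by (rule le_contract_quotient_guarantee)
  with assms(1) show ?thesis
    by (metis contract_refinesI prod.collapse)
qed

end
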